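(* Let $k\ge\ell\ge1$ be integers with $k+\ell\ge6$, and let $G$ be a finite digraph with $s(v)\ge\mathrm{OPT}(k,\ell)$ for every $v\in V(G)$ and with $X\ne\emptyset$. Then $$D\ge\left(1-\frac{1}{m^3}\right)\frac{m}{m+1}.$$
   Context: Put $m=k+\ell$. Digraphs are finite, without loops; $xy$ denotes an arc from $x$ to $y$; two vertices are adjacent if at least one of $xy,yx$ is an arc. The oriented star $S_{k,\ell}$ has a center $c$, a set $O$ of $k$ out-leaves and a set $I$ of $\ell$ in-leaves; its arcs are exactly $co$ ($o\in O$) and $ic$ ($i\in I$). For a digraph $G$ on $n$ vertices, let $\phi$ be a uniformly random map from $V(S_{k,\ell})$ to $V(G)$ (all $n^{m+1}$ maps equally likely), and let $\mathcal S$ be the set of maps $\phi$ that are isomorphisms from $S_{k,\ell}$ onto $G[\mathrm{Im}\,\phi]$ (in particular injective); $s(v)=\Pr[\phi\in\mathcal S\mid v\in\mathrm{Im}\,\phi]$. $\rho(v)$ is the number of vertices adjacent to $v$ divided by $n$. $X=\{v\in V(G):\rho(v)\ge1/2\}$ and $D=\min_{x\in X}\rho(x)$. $\mathrm{OPT}(k,\ell)=2^{-2k}\max_{\alpha\in[0,1]}\{\alpha(1-\alpha)^{2k}+(1-\alpha)\alpha^{2k}\}$ if $k=\ell$, and, if $k>\ell$, $\mathrm{OPT}(k,\ell)=\max_{(\alpha,d)\in[0,\frac12]\times[0,\frac{k}{k+\ell}]}\{\alpha(1-\alpha)^{m}d^k(1-d)^\ell+\frac{(k-1)^{k-1}\ell^\ell}{(m-1)^{m-1}}(1-\alpha)\alpha^{m}(1-d)\}$.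 *)

theory Defs
  imports Complex_Main "HOL-Library.FuncSet"
begin

definition digraph :: "'a set \<Rightarrow> ('a \<Rightarrow> 'a \<Rightarrow> bool) \<Rightarrow> bool" where
  "digraph V A \<longleftrightarrow> finite V \<and> (\<forall>x y. A x y \<longrightarrow> x \<in> V \<and> y \<in> V) \<and> (\<forall>x. \<not> A x x)"

text \<open>The oriented star S_{k,l} on vertex set {0..k+l}: 0 is the centre,
  1..k are the out-leaves, k+1..k+l are the in-leaves.\<close>
definition star_arc :: "nat \<Rightarrow> nat \<Rightarrow> nat \<Rightarrow> nat \<Rightarrow> bool" where
  "star_arc k l a b \<longleftrightarrow> (a = 0 \<and> 1 \<le> b \<and> b \<le> k) \<or> (b = 0 \<and> k + 1 \<le> a \<and> a \<le> k + l)"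

definition all_maps :: "nat \<Rightarrow> nat \<Rightarrow> 'a set \<Rightarrow> (nat \<Rightarrow> 'a) set" where
  "all_maps k l V = PiE {0..k+l} (\<lambda>_. V)"

definition star_maps :: "nat \<Rightarrow> nat \<Rightarrow> 'a set \<Rightarrow> ('a \<Rightarrow> 'a \<Rightarrow> bool) \<Rightarrow> (nat \<Rightarrow> 'a) set" where
  "star_maps k l V A = {\<phi> \<in> all_maps k l V. inj_on \<phi> {0..k+l} \<and>
      (\<forall>a\<in>{0..k+l}. \<forall>b\<in>{0..k+l}. A (\<phi> a) (\<phi> b) \<longleftrightarrow> star_arc k l a b)}"

text \<open>s(v) = Pr[phi in S | v in Im phi] for uniformly random phi.\<close>
definition s_val :: "nat \<Rightarrow> nat \<Rightarrow> 'a set \<Rightarrow> ('a \<Rightarrow> 'a \<Rightarrow> bool) \<Rightarrow> 'a \<Rightarrow> real" where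
  "s_val k l V A v =
     real (card {\<phi> \<in> star_maps k l V A. v \<in> \<phi> ` {0..k+l}}) /
     real (card {\<phi> \<in> all_maps k l V. v \<in> \<phi> ` {0..k+l}})"

definition rho :: "'a set \<Rightarrow> ('a \<Rightarrow> 'a \<Rightarrow> bool) \<Rightarrow> 'a \<Rightarrow> real" where
  "rho V A v = real (card {u \<in> V. A u v \<or> A v u}) / real (card V)"

definition Xset :: "'a set \<Rightarrow> ('a \<Rightarrow> 'a \<Rightarrow> bool) \<Rightarrow> 'a set" where
  "Xset V A = {v \<in> V. rho V A v \<ge> 1/2}"

definition Dval :: "'a set \<Rightarrow> ('a \<Rightarrow> 'a \<Rightarrow> bool) \<Rightarrow> real" where
  "Dval V A = Min (rho V A ` Xset V A)"

text \<open>OPT(k,l) (defined for k \<ge> l; maxima written as suprema over compact sets).\<close>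
definition OPT :: "nat \<Rightarrow> nat \<Rightarrow> real" where
  "OPT k l = (let m = k + l in
     if k = l then
       (1 / 2 ^ (2*k)) * Sup ((\<lambda>\<alpha>::real. \<alpha> * (1-\<alpha>)^(2*k) + (1-\<alpha>) * \<alpha>^(2*k)) ` {0..1})
     else
       Sup ((\<lambda>(\<alpha>::real, d::real). \<alpha> * (1-\<alpha>)^m * d^k * (1-d)^l
             + (real (k-1) ^ (k-1) * real l ^ l / real (m-1) ^ (m-1)) * (1-\<alpha>) * \<alpha>^m * (1-d))
           ` ({0..1/2} \<times> {0..real k / real m})))"

end

theory Submission
  imports Defs "HOL-Analysis.Analysis"
begin

(* Let x be a vertex of X with rho(x) = D, put m = k + l, n = |V|, d = rho(x) n >= n/2 and
   h = n - 1/2, and suppose D < (1 - 1/m^3) m/(m+1).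
   Lower bound: the denominator of s(x) is n^(m+1) - (n-1)^(m+1) >= (m+1) h^m, and OPT(k,l) is at
   least the value of its first summand at alpha = 1/(m+1), so s(x) >= OPT(k,l) forces at least
   c (m/(m+1))^m h^m stars through x, where c = k^k l^l / m^m.
   Upper bound: by AM-GM on the falling factorials counting out- and in-leaves, at most
   c (d - (m-2)/2)^m stars are centred at x; in a star with x as a leaf, the centre is a neighbour
   of x and all other leaves are non-neighbours of x, which gives at most
   d (k c_(k-1,l) + l c_(k,l-1)) (n-d-1)^(m-1) further stars.
   Dividing by c h^m leaves u^m + K w (1-w)^(m-1) with 1/2 <= w <= 1, u < (1 - 1/m^3) m/(m+1) and
   K <= 1.6 m^m/(m-1)^(m-1); subdividing [1/2,1] for m = 6, 7, 8 and crude estimates for m >= 9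
   show that this is below (m/(m+1))^m, a contradiction. *)

lemma prod_le_mean_power:
  fixes x :: "'b \<Rightarrow> real"
  assumes "finite S" "S \<noteq> {}" "\<And>i. i \<in> S \<Longrightarrow> 0 \<le> x i"
  shows "(\<Prod>i\<in>S. x i) \<le> ((\<Sum>i\<in>S. x i) / card S) ^ card S"
proof -
  have n: "card S > 0" using assms by (simp add: card_gt_0_iff)
  have P: "0 \<le> (\<Prod>i\<in>S. x i)" using assms by (simp add: prod_nonneg)
  have "(\<Prod>i\<in>S. x i) powr (1 / card S) \<le> (\<Sum>i\<in>S. x i) / card S"
    using arith_geom_mean[OF assms] by (simp add: sum_divide_distrib)
  then have "((\<Prod>i\<in>S. x i) powr (1 / card S)) ^ card S \<le> ((\<Sum>i\<in>S. x i) / card S) ^ card S"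
    by (intro power_mono) auto
  then show ?thesis using P n by (simp add: powr_inverse_root)
qed

text \<open>\<open>peak_const p q\<close> is the maximum of \<open>t\<^sup>p (1 - t)\<^sup>q\<close> on \<open>[0,1]\<close>.\<close>
definition peak_const :: "nat \<Rightarrow> nat \<Rightarrow> real" where
  "peak_const p q = real p ^ p * real q ^ q / real (p + q) ^ (p + q)"

definition leaf_coeff :: "nat \<Rightarrow> nat \<Rightarrow> real" where
  "leaf_coeff k l = real k * peak_const (k - 1) l + real l * peak_const k (l - 1)"

lemma self_power_pos: "real n ^ n > 0"
  by (cases n) auto

lemma peak_const_pos: "peak_const p q > 0"
  unfolding peak_const_def by (intro divide_pos_pos mult_pos_pos self_power_pos)

lemma leaf_coeff_nonneg: "0 \<le> leaf_coeff k l"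
  unfolding leaf_coeff_def using peak_const_pos by (simp add: less_imp_le)

lemma power_mult_power_le:
  fixes x y :: real
  assumes "p + q > 0" "0 \<le> x" "0 \<le> y"
  shows "x ^ p * y ^ q \<le> peak_const p q * (x + y) ^ (p + q)"
proof -
  define S where "S = {..<p} <+> {..<q}"
  define h :: "nat + nat \<Rightarrow> real" where "h = case_sum (\<lambda>_. x / p) (\<lambda>_. y / q)"
  have h0: "\<And>i. 0 \<le> h i" using assms by (simp add: h_def split: sum.split)
  have "(\<Prod>i\<in>S. h i) \<le> ((\<Sum>i\<in>S. h i) / (p + q)) ^ (p + q)"
    using prod_le_mean_power[of S h] h0 assms(1) by (auto simp: S_def card_Plus)
  also have "\<dots> \<le> ((x + y) / (p + q)) ^ (p + q)"
    using assms h0 by (intro power_mono divide_right_mono sum_nonneg)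
      (auto simp: S_def h_def sum.Plus o_def)
  finally have "(x / p) ^ p * (y / q) ^ q \<le> ((x + y) / (p + q)) ^ (p + q)"
    by (simp add: S_def h_def prod.Plus o_def)
  moreover have "x ^ p * y ^ q = real p ^ p * real q ^ q * ((x / p) ^ p * (y / q) ^ q)"
    by (cases "p = 0"; cases "q = 0") (auto simp: power_divide)
  ultimately have "x ^ p * y ^ q \<le> real p ^ p * real q ^ q * ((x + y) / (p + q)) ^ (p + q)"
    by (simp add: mult_left_mono)
  then show ?thesis by (simp add: peak_const_def power_divide)
qed

lemma sum_of_nat_lessThan: "(\<Sum>i<k. real i) = real k * (real k - 1) / 2"
  by (induction k) (auto simp: field_simps)

lemma falling_products_le:
  fixes a b k l :: nat
  assumes "0 < k" "0 < l"
  shows "real (\<Prod>i<k. a - i) * real (\<Prod>j<l. b - j)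
    \<le> peak_const k l * (max 0 (real a + real b - (real (k + l) - 2) / 2)) ^ (k + l)"
proof (cases "k \<le> a \<and> l \<le> b")
  case False
  then have "(\<Prod>i<k. a - i) = 0 \<or> (\<Prod>j<l. b - j) = 0"
    by (auto simp: prod_zero_iff)
  then have "real (\<Prod>i<k. a - i) * real (\<Prod>j<l. b - j) = 0"
    by (metis mult_zero_left mult_zero_right of_nat_0)
  moreover have "0 \<le> peak_const k l * (max 0 (real a + real b - (real (k + l) - 2) / 2)) ^ (k + l)"
    using peak_const_pos[of k l] by simp
  ultimately show ?thesis by linarith
next
  case True
  define S where "S = {..<k} <+> {..<l}"
  define h :: "nat + nat \<Rightarrow> real"
    where "h = case_sum (\<lambda>i. (real a - i) / k) (\<lambda>j. (real b - j) / l)"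
  define E where "E = real a + real b - (real (k + l) - 2) / 2"
  have h0: "\<And>i. i \<in> S \<Longrightarrow> 0 \<le> h i" using True by (auto simp: S_def h_def)
  have prod_h: "(\<Prod>i\<in>S. h i) = real (\<Prod>i<k. a - i) * real (\<Prod>j<l. b - j) / (real k ^ k * real l ^ l)"
    using True by (simp add: S_def h_def prod.Plus o_def prod_dividef)
  have sum_h: "(\<Sum>i\<in>S. h i) = E"
    using assms by (simp add: S_def h_def E_def sum.Plus o_def sum_divide_distrib[symmetric]
        sum_subtractf sum_of_nat_lessThan field_simps)
  have "(\<Prod>i\<in>S. h i) \<le> ((\<Sum>i\<in>S. h i) / card S) ^ card S"
    by (rule prod_le_mean_power) (use h0 assms in \<open>auto simp: S_def\<close>)
  also have "card S = k + l" by (simp add: S_def card_Plus)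
  finally have "(\<Prod>i\<in>S. h i) \<le> (E / (k + l)) ^ (k + l)" unfolding sum_h .
  moreover have "0 \<le> E" using True by (simp add: E_def)
  ultimately show ?thesis
    unfolding E_def[symmetric] using self_power_pos[of k] self_power_pos[of l]
    by (simp add: prod_h peak_const_def field_simps)
qed

lemma one_minus_power_le:
  fixes x :: real
  assumes "0 \<le> x" "x \<le> 1"
  shows "(1 - x) ^ n \<le> 1 / (1 + real n * x)"
proof -
  have "(1 - x) ^ n * (1 + real n * x) \<le> (1 - x) ^ n * (1 + x) ^ n"
    using Bernoulli_inequality[of x n] assms by (intro mult_left_mono) auto
  also have "\<dots> = (1 - x\<^sup>2) ^ n"
    by (simp add: power_mult_distrib[symmetric] algebra_simps power2_eq_square)
  also have "\<dots> \<le> 1"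
    using assms by (intro power_le_one) (auto simp: power2_eq_square mult_le_one)
  finally show ?thesis using assms by (simp add: field_simps add_pos_nonneg)
qed

lemma one_plus_inverse_power_le_exp:
  assumes "j > 0"
  shows "(1 + 1 / real j) ^ j \<le> exp 1"
proof -
  have "(1 + 1 / real j) ^ j \<le> exp (1 / real j) ^ j"
    by (intro power_mono exp_ge_add_one_self) auto
  also have "\<dots> = exp 1" using assms by (simp flip: exp_of_nat_mult)
  finally show ?thesis .
qed

lemma power_diff_power_ge:
  fixes c h :: real
  assumes "0 \<le> c" "0 \<le> h"
  shows "(c + h) ^ Suc N - (c - h) ^ Suc N \<ge> 2 * real (Suc N) * h * c ^ N"
proof -
  have "(c + h) ^ Suc N - (c - h) ^ Suc N
      = (\<Sum>j\<le>Suc N. real (Suc N choose j) * (h ^ j - (- h) ^ j) * c ^ (Suc N - j))"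
  proof -
    have "(c + h) ^ Suc N - (c - h) ^ Suc N = (h + c) ^ Suc N - (- h + c) ^ Suc N"
      by (simp add: add.commute)
    also have "\<dots> = (\<Sum>j\<le>Suc N. real (Suc N choose j) * h ^ j * c ^ (Suc N - j))
        - (\<Sum>j\<le>Suc N. real (Suc N choose j) * (- h) ^ j * c ^ (Suc N - j))"
      by (simp only: binomial_ring)
    finally show ?thesis by (simp only: sum_subtractf[symmetric] algebra_simps)
  qed
  also have "\<dots> \<ge> real (Suc N choose 1) * (h ^ 1 - (- h) ^ 1) * c ^ (Suc N - 1)"
  proof (rule member_le_sum)
    fix j
    have "(- h) ^ j \<le> h ^ j" using assms abs_ge_self[of "(- h) ^ j"] by (simp add: power_abs)
    then show "0 \<le> real (Suc N choose j) * (h ^ j - (- h) ^ j) * c ^ (Suc N - j)"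
      using assms by simp
  qed auto
  finally show ?thesis by (simp add: algebra_simps)
qed

lemma peak_const_eq_powers:
  assumes "0 < p + q"
  shows "peak_const p q = (real p / real (p + q)) ^ p * (real q / real (p + q)) ^ q"
  by (simp add: peak_const_def power_divide power_add)

lemma peak_const_diag: "0 < k \<Longrightarrow> peak_const k k = 1 / 2 ^ (2 * k)"
proof -
  assume k: "0 < k"
  have "real k / real (k + k) = 1 / 2" using k by simp
  then have "peak_const k k = (1/2) ^ k * (1/2) ^ k" using k by (simp only: peak_const_eq_powers)
  also have "\<dots> = 1 / 2 ^ (2 * k)" by (simp add: power_add[symmetric] mult_2 power_one_over)
  finally show ?thesis .
qed

lemma pred_self_power_le:
  assumes "3 \<le> k"
  shows "real k * real (k - 1) ^ (k - 1) \<le> 3/5 * real k ^ k"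
proof -
  have "(1 - 1 / real k) ^ (k - 1) \<le> 1 / (1 + real (k - 1) * (1 / real k))"
    using assms by (intro one_minus_power_le) auto
  also have "\<dots> = real k / (2 * real k - 1)"
    using assms by (simp add: field_simps of_nat_diff)
  also have "\<dots> \<le> 3/5" using assms by (simp add: field_simps)
  finally have "(1 - 1 / real k) ^ (k - 1) \<le> 3/5" .
  then have "real k ^ k * (1 - 1 / real k) ^ (k - 1) \<le> real k ^ k * (3/5)"
    by (intro mult_left_mono) auto
  moreover have "real k ^ k * (1 - 1 / real k) ^ (k - 1) = real k * real (k - 1) ^ (k - 1)"
  proof -
    have "real k * (1 - 1 / real k) = real (k - 1)" using assms by (simp add: field_simps of_nat_diff)
    moreover have "real k ^ k = real k * real k ^ (k - 1)" using assms by (cases k) auto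
    ultimately show ?thesis by (simp add: power_mult_distrib[symmetric] mult.assoc)
  qed
  ultimately show ?thesis by simp
qed

lemma pred_self_power_le_self_power: "real l * real (l - 1) ^ (l - 1) \<le> real l ^ l"
proof (cases l)
  case (Suc n)
  then show ?thesis by (auto intro: mult_left_mono power_mono)
qed simp

lemma mean_ratio_power_gt:
  assumes "0 < m"
  shows "100/272 < (real m / (real m + 1)) ^ m"
proof -
  have "100/272 < 1 / exp (1::real)" using e_less_272 by (simp add: field_simps)
  also have "\<dots> \<le> 1 / (1 + 1 / real m) ^ m"
    using one_plus_inverse_power_le_exp[OF assms]
    by (intro divide_left_mono) (auto simp: add_pos_nonneg)
  also have "\<dots> = (real m / (real m + 1)) ^ m"
    using assms by (simp add: power_divide field_simps)
  finally show ?thesis .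
qed

lemma self_power_ratio_le:
  assumes "2 \<le> m"
  shows "real m ^ m / real (m - 1) ^ (m - 1) \<le> 272/100 * real m"
proof -
  have "real m ^ m / real (m - 1) ^ (m - 1) = real m * (1 + 1 / real (m - 1)) ^ (m - 1)"
    using assms by (cases m) (auto simp: power_divide field_simps)
  also have "\<dots> \<le> real m * exp 1"
    using one_plus_inverse_power_le_exp[of "m - 1"] assms by (intro mult_left_mono) auto
  also have "\<dots> \<le> 272/100 * real m"
    using e_less_272 by (subst mult.commute) (intro mult_right_mono, auto)
  finally show ?thesis .
qed

lemma linear_le_exp2: "9 \<le> m \<Longrightarrow> 512 * m \<le> 9 * 2 ^ m"
  by (induction m rule: dec_induct) simp_all

lemma cubic_le_exp5: "9 \<le> m \<Longrightarrow> 100 * m * (m\<^sup>2 + 1) \<le> 5 ^ (m - 1)"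
proof (induction m rule: dec_induct)
  case (step n)
  have "100 * Suc n * ((Suc n)\<^sup>2 + 1) \<le> 5 * (100 * n * (n\<^sup>2 + 1))"
  proof -
    have "n\<^sup>2 \<le> n ^ 3" "2 \<le> n ^ 3" using step(1) self_le_power[of n 3]
      by (auto simp: power_increasing)
    moreover have "100 * Suc n * ((Suc n)\<^sup>2 + 1) = 100 * n ^ 3 + 300 * n\<^sup>2 + 400 * n + 200"
      "5 * (100 * n * (n\<^sup>2 + 1)) = 500 * n ^ 3 + 500 * n"
      by (simp_all add: power2_eq_square power3_eq_cube algebra_simps)
    ultimately show ?thesis by linarith
  qed
  also have "\<dots> \<le> 5 ^ (Suc n - 1)" using step by (cases n) auto
  finally show ?case .
qed simp

text \<open>The normalised count of stars through a vertex: \<open>u\<^sup>m\<close> bounds those centred at it and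
  \<open>K w (1 - w)\<^sup>m\<^sup>-\<^sup>1\<close> those in which it is a leaf, where \<open>w\<close> is its normalised degree.\<close>
definition star_profile :: "nat \<Rightarrow> real \<Rightarrow> real \<Rightarrow> real \<Rightarrow> real" where
  "star_profile m K u w = u ^ m + K * w * (1 - w) ^ (m - 1)"

text \<open>Both terms are bounded at a corner of a box, so on a box the bound is a single numerical
  inequality; the cases \<open>m = 6, 7, 8\<close> below cover \<open>[1/2, 1]\<close> by such boxes.\<close>
lemma star_profile_lt_by_box:
  fixes a b w u B K Kb Q :: real
  assumes "0 \<le> a" "a \<le> w" "w \<le> b" "w \<le> 1" "0 \<le> u" "u \<le> B" "0 \<le> K" "K \<le> Kb"
    and "B ^ m + Kb * b * (1 - a) ^ (m - 1) < Q"
  shows "star_profile m K u w < Q"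
proof -
  have "u ^ m \<le> B ^ m" using assms by (intro power_mono) auto
  moreover have "K * w * (1 - w) ^ (m - 1) \<le> Kb * b * (1 - a) ^ (m - 1)"
    using assms by (intro mult_mono power_mono) auto
  ultimately show ?thesis using assms(9) unfolding star_profile_def by linarith
qed

lemma star_profile_lt_6:
  fixes K u w :: real
  assumes "0 \<le> K" "K \<le> 16/10 * 6^6 / 5^5" "1/2 \<le> w" "w \<le> 1"
    and "0 \<le> u" "u \<le> w" "u < (1 - 1/6^3) * (6/7)"
  shows "star_profile 6 K u w < (6/7) ^ 6"
proof -
  have box: "star_profile 6 K u w < (6/7) ^ 6"
    if "a \<le> w" "w \<le> b" "u \<le> B" "B ^ 6 + 16/10 * 6^6 / 5^5 * b * (1 - a) ^ 5 < (6/7) ^ 6"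
      "0 \<le> a" for a b B :: real
    using star_profile_lt_by_box[of a w b u B K "16/10 * 6^6 / 5^5" 6] assms that by auto
  consider "w \<le> 101/200" | "101/200 \<le> w" "w \<le> 21/40" | "21/40 \<le> w" "w \<le> 3/5"
    | "3/5 \<le> w" "w \<le> 153/200" | "153/200 \<le> w" "w \<le> 17/20" | "17/20 \<le> w"
    by linarith
  then show ?thesis
  proof cases
    case 1 then show ?thesis using assms by (intro box[of "1/2" "101/200" "101/200"]) (auto simp: power_divide)
  next
    case 2 then show ?thesis using assms by (intro box[of "101/200" "21/40" "21/40"]) (auto simp: power_divide)
  next
    case 3 then show ?thesis using assms by (intro box[of "21/40" "3/5" "3/5"]) (auto simp: power_divide)
  next
    case 4 then show ?thesis using assms by (intro box[of "3/5" "153/200" "153/200"]) (auto simp: power_divide)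
  next
    case 5 then show ?thesis using assms by (intro box[of "153/200" "17/20" "17/20"]) (auto simp: power_divide)
  next
    case 6 then show ?thesis using assms by (intro box[of "17/20" 1 "(1 - 1/6^3) * (6/7)"]) (auto simp: power_divide)
  qed
qed

lemma star_profile_lt_7:
  fixes K u w :: real
  assumes "0 \<le> K" "K \<le> 16/10 * 7^7 / 6^6" "1/2 \<le> w" "w \<le> 1"
    and "0 \<le> u" "u \<le> w" "u < (1 - 1/7^3) * (7/8)"
  shows "star_profile 7 K u w < (7/8) ^ 7"
proof -
  have box: "star_profile 7 K u w < (7/8) ^ 7"
    if "a \<le> w" "w \<le> b" "u \<le> B" "B ^ 7 + 16/10 * 7^7 / 6^6 * b * (1 - a) ^ 6 < (7/8) ^ 7"
      "0 \<le> a" for a b B :: real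
    using star_profile_lt_by_box[of a w b u B K "16/10 * 7^7 / 6^6" 7] assms that by auto
  consider "w \<le> 7/10" | "7/10 \<le> w" "w \<le> 173/200" | "173/200 \<le> w"
    by linarith
  then show ?thesis
  proof cases
    case 1 then show ?thesis using assms by (intro box[of "1/2" "7/10" "7/10"]) (auto simp: power_divide)
  next
    case 2 then show ?thesis using assms by (intro box[of "7/10" "173/200" "173/200"]) (auto simp: power_divide)
  next
    case 3 then show ?thesis using assms by (intro box[of "173/200" 1 "(1 - 1/7^3) * (7/8)"]) (auto simp: power_divide)
  qed
qed

lemma star_profile_lt_8:
  fixes K u w :: real
  assumes "0 \<le> K" "K \<le> 16/10 * 8^8 / 7^7" "1/2 \<le> w" "w \<le> 1"
    and "0 \<le> u" "u \<le> w" "u < (1 - 1/8^3) * (8/9)"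
  shows "star_profile 8 K u w < (8/9) ^ 8"
proof -
  have box: "star_profile 8 K u w < (8/9) ^ 8"
    if "a \<le> w" "w \<le> b" "u \<le> B" "B ^ 8 + 16/10 * 8^8 / 7^7 * b * (1 - a) ^ 7 < (8/9) ^ 8"
      "0 \<le> a" for a b B :: real
    using star_profile_lt_by_box[of a w b u B K "16/10 * 8^8 / 7^7" 8] assms that by auto
  consider "w \<le> 161/200" | "161/200 \<le> w"
    by linarith
  then show ?thesis
  proof cases
    case 1 then show ?thesis using assms by (intro box[of "1/2" "161/200" "161/200"]) (auto simp: power_divide)
  next
    case 2 then show ?thesis using assms by (intro box[of "161/200" 1 "(1 - 1/8^3) * (8/9)"]) (auto simp: power_divide)
  qed
qed

lemma star_profile_corner_low_lt:
  assumes m: "9 \<le> m"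
  shows "(4/5) ^ m + 16/10 * (272/100 * real m) * (4/5) * (1 - 1/2) ^ (m - 1)
    < (real m / (real m + 1)) ^ m"
proof -
  have "(4/5::real) ^ m \<le> (4/5) ^ 9" using m by (intro power_decreasing) auto
  moreover have "16/10 * (272/100 * real m) * (4/5) * (1 - 1/2) ^ (m - 1)
      = 16/10 * (272/100) * (8/5) * (real m / 2 ^ m)"
    using m by (cases m) (auto simp: power_divide field_simps)
  moreover have "real m / 2 ^ m \<le> 9/512"
  proof -
    have "real (512 * m) \<le> real (9 * 2 ^ m)" using linear_le_exp2[OF m] by (simp only: of_nat_le_iff)
    then show ?thesis by (simp add: field_simps)
  qed
  ultimately show ?thesis
    using mean_ratio_power_gt[of m] m by (simp add: power_divide)
qed

lemma star_profile_corner_high_lt: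
  assumes m: "9 \<le> m"
  shows "((1 - 1 / real m ^ 3) * (real m / (real m + 1))) ^ m
      + 16/10 * (272/100 * real m) * 1 * (1 - 4/5) ^ (m - 1)
    < (real m / (real m + 1)) ^ m"
proof -
  define Q where "Q = (real m / (real m + 1)) ^ m"
  define a where "a = real m ^ 2"
  have mpos: "0 < real m" and a0: "0 \<le> a" using m by (auto simp: a_def)
  then have a: "0 \<le> a" "a + 1 \<noteq> 0" by linarith+
  have "(1 - 1 / real m ^ 3) ^ m \<le> 1 / (1 + real m * (1 / real m ^ 3))"
    using m by (intro one_minus_power_le) auto
  also have "\<dots> = a / (a + 1)"
    using mpos by (simp add: a_def field_simps power2_eq_square power3_eq_cube)
  finally have "(1 - 1 / real m ^ 3) ^ m \<le> a / (a + 1)" .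
  then have "((1 - 1 / real m ^ 3) * (real m / (real m + 1))) ^ m \<le> Q * (a / (a + 1))"
    unfolding Q_def power_mult_distrib using mpos
    by (subst mult.commute) (intro mult_left_mono, auto)
  also have "\<dots> = Q - Q / (a + 1)" using a by (simp add: field_simps)
  finally have "((1 - 1 / real m ^ 3) * (real m / (real m + 1))) ^ m \<le> Q - Q / (a + 1)" .
  moreover have "16/10 * (272/100 * real m) * 1 * (1 - 4/5) ^ (m - 1) < Q / (a + 1)"
  proof -
    have "real (100 * m * (m\<^sup>2 + 1)) \<le> real (5 ^ (m - 1))"
      using cubic_le_exp5[OF m] by (simp only: of_nat_le_iff)
    then have "100 * real m * (a + 1) \<le> 5 ^ (m - 1)" by (simp add: a_def algebra_simps)
    have "16/10 * (272/100 * real m) / (100 * real m) = 16/10 * (272/100) / 100"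
      using mpos by simp
    have "16/10 * (272/100 * real m) * 1 * (1 - 4/5) ^ (m - 1) = 16/10 * (272/100 * real m) / 5 ^ (m - 1)"
      by (simp add: power_divide)
    also have "\<dots> \<le> 16/10 * (272/100 * real m) / (100 * real m * (a + 1))"
      using \<open>100 * real m * (a + 1) \<le> 5 ^ (m - 1)\<close> mpos a
      by (intro divide_left_mono) auto
    also have "\<dots> = 16/10 * (272/100 * real m) / (100 * real m) / (a + 1)"
      by (rule divide_divide_eq_left[symmetric])
    also have "\<dots> = 16/10 * (272/100) / 100 / (a + 1)"
      using \<open>16/10 * (272/100 * real m) / (100 * real m) = 16/10 * (272/100) / 100\<close> by (rule arg_cong)
    also have "\<dots> < Q / (a + 1)"
      using mean_ratio_power_gt[of m] m a unfolding Q_def by (intro divide_strict_right_mono) auto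
    finally show ?thesis .
  qed
  ultimately show ?thesis unfolding Q_def by linarith
qed

lemma star_profile_lt_large:
  fixes K u w :: real
  assumes m: "9 \<le> m" and K: "0 \<le> K" "K \<le> 16/10 * real m ^ m / real (m - 1) ^ (m - 1)"
    and w: "1/2 \<le> w" "w \<le> 1" and u: "0 \<le> u" "u \<le> w"
    and u_lt: "u < (1 - 1 / real m ^ 3) * (real m / (real m + 1))"
  shows "star_profile m K u w < (real m / (real m + 1)) ^ m"
proof -
  define Kb where "Kb = 16/10 * (272/100 * real m)"
  have "16/10 * real m ^ m / real (m - 1) ^ (m - 1) \<le> Kb"
    using self_power_ratio_le[of m] m unfolding Kb_def times_divide_eq_right[symmetric]
    by (intro mult_left_mono) auto
  with K have Kb: "0 \<le> K" "K \<le> Kb" by linarith+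
  show ?thesis
  proof (cases "w \<le> 4/5")
    case True
    then show ?thesis using star_profile_corner_low_lt[OF m, folded Kb_def] w u Kb
      by (intro star_profile_lt_by_box[of "1/2" w "4/5" u "4/5" K Kb]) auto
  next
    case False
    then show ?thesis using star_profile_corner_high_lt[OF m, folded Kb_def] w u u_lt Kb
      by (intro star_profile_lt_by_box[of "4/5" w 1 u _ K Kb]) auto
  qed
qed

lemma star_profile_lt:
  fixes K u w :: real
  assumes m: "6 \<le> m" and K: "0 \<le> K" "K \<le> 16/10 * real m ^ m / real (m - 1) ^ (m - 1)"
    and w: "1/2 \<le> w" "w \<le> 1" and u: "0 \<le> u" "u \<le> w"
    and u_lt: "u < (1 - 1 / real m ^ 3) * (real m / (real m + 1))"
  shows "star_profile m K u w < (real m / (real m + 1)) ^ m"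
proof -
  consider "m = 6" | "m = 7" | "m = 8" | "9 \<le> m" using m by linarith
  then show ?thesis
  proof cases
    case 1 then show ?thesis using star_profile_lt_6[OF K(1) _ w u] K(2) u_lt by simp
  next
    case 2 then show ?thesis using star_profile_lt_7[OF K(1) _ w u] K(2) u_lt by simp
  next
    case 3 then show ?thesis using star_profile_lt_8[OF K(1) _ w u] K(2) u_lt by simp
  next
    case 4 then show ?thesis using star_profile_lt_large[OF _ K w u u_lt] by simp
  qed
qed

definition neighbours :: "'a set \<Rightarrow> ('a \<Rightarrow> 'a \<Rightarrow> bool) \<Rightarrow> 'a \<Rightarrow> 'a set" where
  "neighbours V A x = {u \<in> V. A u x \<or> A x u}"

definition non_neighbours :: "'a set \<Rightarrow> ('a \<Rightarrow> 'a \<Rightarrow> bool) \<Rightarrow> 'a \<Rightarrow> 'a set" where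
  "non_neighbours V A x = V - neighbours V A x - {x}"

definition out_neighbours :: "'a set \<Rightarrow> ('a \<Rightarrow> 'a \<Rightarrow> bool) \<Rightarrow> 'a \<Rightarrow> 'a set" where
  "out_neighbours V A y = {u \<in> V. A y u \<and> \<not> A u y}"

definition in_neighbours :: "'a set \<Rightarrow> ('a \<Rightarrow> 'a \<Rightarrow> bool) \<Rightarrow> 'a \<Rightarrow> 'a set" where
  "in_neighbours V A y = {u \<in> V. A u y \<and> \<not> A y u}"

definition leaf_slots :: "nat \<Rightarrow> nat \<Rightarrow> 'a \<Rightarrow> 'a \<Rightarrow> 'a set \<Rightarrow> 'a set \<Rightarrow> nat \<Rightarrow> 'a set" where
  "leaf_slots k j x y P Q i =
     (if i = 0 then {y} else if i = j then {x} else if i \<le> k then P else Q)"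

lemma rho_eq: "rho V A x = real (card (neighbours V A x)) / real (card V)"
  by (simp add: rho_def neighbours_def)

lemma card_non_neighbours:
  assumes "digraph V A" "x \<in> V"
  shows "card (non_neighbours V A x) = card V - card (neighbours V A x) - 1"
    and "card (neighbours V A x) + 1 \<le> card V"
proof -
  have fin: "finite V" using assms(1) by (simp add: digraph_def)
  have x: "x \<notin> neighbours V A x" using assms(1) by (simp add: digraph_def neighbours_def)
  have sub: "insert x (neighbours V A x) \<subseteq> V" using assms(2) by (auto simp: neighbours_def)
  have card_ins: "card (insert x (neighbours V A x)) = card (neighbours V A x) + 1"
    using x fin by (simp add: neighbours_def)
  have "non_neighbours V A x = V - insert x (neighbours V A x)"
    by (auto simp: non_neighbours_def)
  then show "card (non_neighbours V A x) = card V - card (neighbours V A x) - 1"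
    using card_Diff_subset[OF finite_subset[OF sub fin] sub] card_ins by simp
  show "card (neighbours V A x) + 1 \<le> card V"
    using card_mono[OF fin sub] card_ins by simp
qed

lemma star_mapsD:
  assumes "\<phi> \<in> star_maps k l V A"
  shows "\<phi> \<in> {0..k+l} \<rightarrow>\<^sub>E V" "inj_on \<phi> {0..k+l}"
    "\<And>a b. a \<in> {0..k+l} \<Longrightarrow> b \<in> {0..k+l} \<Longrightarrow> A (\<phi> a) (\<phi> b) \<longleftrightarrow> star_arc k l a b"
  using assms unfolding star_maps_def all_maps_def by auto

lemma star_map_centre_neighbour:
  assumes "\<phi> \<in> star_maps k l V A" "1 \<le> j" "j \<le> k + l"
  shows "\<phi> 0 \<in> neighbours V A (\<phi> j)"
proof -
  note D = star_mapsD[OF assms(1)]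
  have "star_arc k l 0 j \<or> star_arc k l j 0" using assms by (auto simp: star_arc_def)
  then have "A (\<phi> 0) (\<phi> j) \<or> A (\<phi> j) (\<phi> 0)" using D(3)[of 0 j] D(3)[of j 0] assms by auto
  moreover have "\<phi> 0 \<in> V" using D(1) by auto
  ultimately show ?thesis by (auto simp: neighbours_def)
qed

lemma star_map_in_leaf_slots:
  assumes "\<phi> \<in> star_maps k l V A" "1 \<le> j" "j \<le> k + l" "i \<le> k + l"
  shows "\<phi> i \<in> leaf_slots k j (\<phi> j) (\<phi> 0)
    (non_neighbours V A (\<phi> j) \<inter> out_neighbours V A (\<phi> 0))
    (non_neighbours V A (\<phi> j) \<inter> in_neighbours V A (\<phi> 0)) i"
proof (cases "i = 0 \<or> i = j")
  case False
  note D = star_mapsD[OF assms(1)]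
  have "\<phi> i \<noteq> \<phi> j" using D(2) False assms by (auto dest: inj_onD)
  moreover have "\<not> A (\<phi> i) (\<phi> j)" "\<not> A (\<phi> j) (\<phi> i)" "\<phi> i \<in> V"
    using D(3)[of i j] D(3)[of j i] D(1) False assms by (auto simp: star_arc_def)
  ultimately have "\<phi> i \<in> non_neighbours V A (\<phi> j)"
    by (auto simp: non_neighbours_def neighbours_def)
  moreover have "i \<le> k \<Longrightarrow> A (\<phi> 0) (\<phi> i) \<and> \<not> A (\<phi> i) (\<phi> 0)"
    "\<not> i \<le> k \<Longrightarrow> A (\<phi> i) (\<phi> 0) \<and> \<not> A (\<phi> 0) (\<phi> i)"
    using D(3)[of 0 i] D(3)[of i 0] False assms by (auto simp: star_arc_def)
  ultimately show ?thesis using False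
    by (auto simp: leaf_slots_def out_neighbours_def in_neighbours_def non_neighbours_def)
qed (auto simp: leaf_slots_def)

lemma star_maps_leaf_subset:
  assumes "1 \<le> j" "j \<le> k + l"
  shows "{\<phi> \<in> star_maps k l V A. \<phi> j = x} \<subseteq> (\<Union>y\<in>neighbours V A x.
    PiE {0..k+l} (leaf_slots k j x y
      (non_neighbours V A x \<inter> out_neighbours V A y) (non_neighbours V A x \<inter> in_neighbours V A y)))"
proof
  fix \<phi> assume "\<phi> \<in> {\<phi> \<in> star_maps k l V A. \<phi> j = x}"
  then have \<phi>: "\<phi> \<in> star_maps k l V A" and x: "\<phi> j = x" by auto
  have "\<phi> \<in> PiE {0..k+l} (leaf_slots k j x (\<phi> 0)
      (non_neighbours V A x \<inter> out_neighbours V A (\<phi> 0)) (non_neighbours V A x \<inter> in_neighbours V A (\<phi> 0)))"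
    using star_map_in_leaf_slots[OF \<phi> assms] star_mapsD(1)[OF \<phi>] x by (auto simp: PiE_iff)
  then show "\<phi> \<in> (\<Union>y\<in>neighbours V A x. PiE {0..k+l}
      (leaf_slots k j x y (non_neighbours V A x \<inter> out_neighbours V A y) (non_neighbours V A x \<inter> in_neighbours V A y)))"
    using star_map_centre_neighbour[OF \<phi> assms] x by blast
qed

lemma card_leaf_slots_PiE:
  assumes "1 \<le> j" "j \<le> k + l"
  shows "card (PiE {0..k+l} (leaf_slots k j x y P Q)) =
    card P ^ (if j \<le> k then k - 1 else k) * card Q ^ (if j \<le> k then l else l - 1)"
proof -
  let ?g = "\<lambda>i. card (leaf_slots k j x y P Q i)"
  have "card (PiE {0..k+l} (leaf_slots k j x y P Q)) = (\<Prod>i\<in>{0..k+l}. ?g i)"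
    by (rule card_PiE) simp
  also have "\<dots> = ?g 0 * (?g j * ((\<Prod>i\<in>{1..k} - {j}. ?g i) * (\<Prod>i\<in>{k+1..k+l} - {j}. ?g i)))"
  proof -
    have "{0..k+l} = insert 0 (insert j (({1..k} - {j}) \<union> ({k+1..k+l} - {j})))"
      using assms by auto
    moreover have "(\<Prod>i\<in>({1..k} - {j}) \<union> ({k+1..k+l} - {j}). ?g i)
        = (\<Prod>i\<in>{1..k} - {j}. ?g i) * (\<Prod>i\<in>{k+1..k+l} - {j}. ?g i)"
      by (rule prod.union_disjoint) auto
    ultimately show ?thesis using assms by simp
  qed
  also have "\<dots> = (\<Prod>i\<in>{1..k} - {j}. card P) * (\<Prod>i\<in>{k+1..k+l} - {j}. card Q)"
    using assms by (auto simp: leaf_slots_def intro!: prod.cong arg_cong2[where f = "(*)"])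
  also have "\<dots> = card P ^ (if j \<le> k then k - 1 else k) * card Q ^ (if j \<le> k then l else l - 1)"
    using assms by simp
  finally show ?thesis .
qed

lemma card_Int_out_in_neighbours_le:
  assumes "finite S"
  shows "card (S \<inter> out_neighbours V A y) + card (S \<inter> in_neighbours V A y) \<le> card S"
proof -
  have "card (S \<inter> out_neighbours V A y) + card (S \<inter> in_neighbours V A y)
      = card (S \<inter> out_neighbours V A y \<union> S \<inter> in_neighbours V A y)"
    using assms by (intro card_Un_disjoint[symmetric]) (auto simp: out_neighbours_def in_neighbours_def)
  also have "\<dots> \<le> card S" using assms by (intro card_mono) auto
  finally show ?thesis .
qed

lemma card_star_maps_leaf_le:
  assumes fin: "finite V" and j: "1 \<le> j" "j \<le> k + l"
    and p: "p = (if j \<le> k then k - 1 else k)" and q: "q = (if j \<le> k then l else l - 1)"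
    and pq: "p + q > 0"
  shows "real (card {\<phi> \<in> star_maps k l V A. \<phi> j = x}) \<le>
    real (card (neighbours V A x)) * peak_const p q * real (card (non_neighbours V A x)) ^ (p + q)"
proof -
  let ?O = "\<lambda>y. non_neighbours V A x \<inter> out_neighbours V A y"
  let ?I = "\<lambda>y. non_neighbours V A x \<inter> in_neighbours V A y"
  let ?U = "\<lambda>y. PiE {0..k+l} (leaf_slots k j x y (?O y) (?I y))"
  have fin_nb: "finite (neighbours V A x)" using fin by (simp add: neighbours_def)
  have fin_U: "finite (?U y)" for y
    using fin by (intro finite_PiE) (auto simp: leaf_slots_def non_neighbours_def)
  have "card {\<phi> \<in> star_maps k l V A. \<phi> j = x} \<le> card (\<Union>y\<in>neighbours V A x. ?U y)"
    using star_maps_leaf_subset[OF j, of V A x] fin_nb fin_U by (intro card_mono) auto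
  also have "\<dots> \<le> (\<Sum>y\<in>neighbours V A x. card (?U y))"
    using fin_nb by (rule card_UN_le)
  also have "\<dots> = (\<Sum>y\<in>neighbours V A x. card (?O y) ^ p * card (?I y) ^ q)"
    by (simp add: card_leaf_slots_PiE[OF j] p q)
  finally have "real (card {\<phi> \<in> star_maps k l V A. \<phi> j = x})
      \<le> real (\<Sum>y\<in>neighbours V A x. card (?O y) ^ p * card (?I y) ^ q)"
    by (simp only: of_nat_le_iff)
  also have "\<dots> = (\<Sum>y\<in>neighbours V A x. real (card (?O y)) ^ p * real (card (?I y)) ^ q)"
    by simp
  also have "\<dots> \<le> (\<Sum>y\<in>neighbours V A x. peak_const p q * real (card (non_neighbours V A x)) ^ (p + q))"
  proof (rule sum_mono)
    fix y
    have "real (card (?O y)) ^ p * real (card (?I y)) ^ q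
        \<le> peak_const p q * (real (card (?O y)) + real (card (?I y))) ^ (p + q)"
      using pq by (intro power_mult_power_le) auto
    also have "\<dots> \<le> peak_const p q * real (card (non_neighbours V A x)) ^ (p + q)"
      using card_Int_out_in_neighbours_le[of "non_neighbours V A x" V A y] fin peak_const_pos[of p q]
      by (intro mult_left_mono power_mono) (auto simp: non_neighbours_def simp flip: of_nat_add)
    finally show "real (card (?O y)) ^ p * real (card (?I y)) ^ q
        \<le> peak_const p q * real (card (non_neighbours V A x)) ^ (p + q)" .
  qed
  finally show ?thesis by simp
qed

lemma card_injections:
  assumes "finite B" "finite C"
  shows "card {f \<in> B \<rightarrow>\<^sub>E C. inj_on f B} = (\<Prod>i<card B. card C - i)"
  using card_inj_on_subset_funcset[OF assms order_refl] by (simp add: lessThan_atLeast0)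

lemma inj_on_restrict_pair:
  fixes k l :: nat
  shows "inj_on (\<lambda>\<phi>. (restrict \<phi> {1..k}, restrict \<phi> {k+1..k+l}))
    {\<phi> \<in> {0..k+l} \<rightarrow>\<^sub>E V. \<phi> 0 = x}"
proof (rule inj_onI)
  fix \<phi> \<psi>
  assume \<phi>: "\<phi> \<in> {\<phi> \<in> {0..k+l} \<rightarrow>\<^sub>E V. \<phi> 0 = x}"
    and \<psi>: "\<psi> \<in> {\<phi> \<in> {0..k+l} \<rightarrow>\<^sub>E V. \<phi> 0 = x}"
    and eq: "(restrict \<phi> {1..k}, restrict \<phi> {k+1..k+l}) = (restrict \<psi> {1..k}, restrict \<psi> {k+1..k+l})"
  have "\<phi> i = \<psi> i" if i: "i \<in> {0..k+l}" for i
  proof (cases "i = 0")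
    case True
    then show ?thesis using \<phi> \<psi> by simp
  next
    case False
    then have "i \<in> {1..k} \<or> i \<in> {k+1..k+l}" using i by auto
    then show ?thesis using eq by (auto dest: fun_cong[of _ _ i])
  qed
  then show "\<phi> = \<psi>" using \<phi> \<psi> by (intro PiE_ext) auto
qed

lemma card_star_maps_centre_le_falling:
  assumes fin: "finite V"
  shows "card {\<phi> \<in> star_maps k l V A. \<phi> 0 = x}
    \<le> (\<Prod>i<k. card (out_neighbours V A x) - i) * (\<Prod>j<l. card (in_neighbours V A x) - j)"
proof -
  define Z where "Z = {\<phi> \<in> star_maps k l V A. \<phi> 0 = x}"
  define R where "R = (\<lambda>\<phi>::nat \<Rightarrow> 'a. (restrict \<phi> {1..k}, restrict \<phi> {k+1..k+l}))"
  define SO where "SO = {f \<in> {1..k} \<rightarrow>\<^sub>E out_neighbours V A x. inj_on f {1..k}}"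
  define SI where "SI = {f \<in> {k+1..k+l} \<rightarrow>\<^sub>E in_neighbours V A x. inj_on f {k+1..k+l}}"
  have fin_OI: "finite (out_neighbours V A x)" "finite (in_neighbours V A x)"
    using fin by (auto simp: out_neighbours_def in_neighbours_def)
  have "Z \<subseteq> {\<phi> \<in> {0..k+l} \<rightarrow>\<^sub>E V. \<phi> 0 = x}" unfolding Z_def by (blast dest: star_mapsD(1))
  then have "inj_on R Z" unfolding R_def by (rule inj_on_subset[OF inj_on_restrict_pair])
  moreover have "R ` Z \<subseteq> SO \<times> SI"
  proof (rule image_subsetI)
    fix \<phi> assume "\<phi> \<in> Z"
    then have \<phi>: "\<phi> \<in> star_maps k l V A" and x: "\<phi> 0 = x" by (auto simp: Z_def)
    note D = star_mapsD[OF \<phi>]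
    have "\<phi> i \<in> out_neighbours V A x" if "i \<in> {1..k}" for i
      using that D(1) D(3)[of 0 i] D(3)[of i 0] x by (auto simp: star_arc_def out_neighbours_def)
    moreover have "\<phi> i \<in> in_neighbours V A x" if "i \<in> {k+1..k+l}" for i
      using that D(1) D(3)[of 0 i] D(3)[of i 0] x by (auto simp: star_arc_def in_neighbours_def)
    ultimately show "R \<phi> \<in> SO \<times> SI"
      using D(2) by (auto simp: R_def SO_def SI_def inj_on_def)
  qed
  moreover have "finite SO" "finite SI"
    unfolding SO_def SI_def using fin_OI by (auto intro!: finite_PiE)
  ultimately have "card Z \<le> card (SO \<times> SI)"
    by (intro card_inj_on_le[of R]) auto
  also have "\<dots> = (\<Prod>i<k. card (out_neighbours V A x) - i) * (\<Prod>j<l. card (in_neighbours V A x) - j)"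
    using fin_OI by (simp add: card_cartesian_product SO_def SI_def card_injections)
  finally show ?thesis unfolding Z_def .
qed

lemma card_star_maps_centre_le:
  assumes fin: "finite V" and "0 < k" "0 < l"
  shows "real (card {\<phi> \<in> star_maps k l V A. \<phi> 0 = x}) \<le>
    peak_const k l * (max 0 (real (card (neighbours V A x)) - (real (k + l) - 2) / 2)) ^ (k + l)"
proof -
  let ?a = "card (out_neighbours V A x)" and ?b = "card (in_neighbours V A x)"
  have "neighbours V A x \<inter> out_neighbours V A x = out_neighbours V A x"
    "neighbours V A x \<inter> in_neighbours V A x = in_neighbours V A x"
    by (auto simp: neighbours_def out_neighbours_def in_neighbours_def)
  then have "?a + ?b \<le> card (neighbours V A x)"
    using card_Int_out_in_neighbours_le[of "neighbours V A x" V A x] fin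
    by (simp add: neighbours_def)
  have "real (card {\<phi> \<in> star_maps k l V A. \<phi> 0 = x}) \<le> real ((\<Prod>i<k. ?a - i) * (\<Prod>j<l. ?b - j))"
    using card_star_maps_centre_le_falling[OF fin, of k l A x] by (simp only: of_nat_le_iff)
  also have "\<dots> = real (\<Prod>i<k. ?a - i) * real (\<Prod>j<l. ?b - j)"
    by (rule of_nat_mult)
  also have "\<dots> \<le> peak_const k l * (max 0 (real ?a + real ?b - (real (k + l) - 2) / 2)) ^ (k + l)"
    by (rule falling_products_le) fact+
  also have "\<dots> \<le> peak_const k l * (max 0 (real (card (neighbours V A x)) - (real (k + l) - 2) / 2)) ^ (k + l)"
    using \<open>?a + ?b \<le> card (neighbours V A x)\<close> peak_const_pos[of k l]
    by (intro mult_left_mono power_mono) auto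
  finally show ?thesis .
qed

lemma card_star_maps_through_le_sum:
  assumes "finite V"
  shows "real (card {\<phi> \<in> star_maps k l V A. x \<in> \<phi> ` {0..k+l}})
    \<le> real (card {\<phi> \<in> star_maps k l V A. \<phi> 0 = x})
      + (\<Sum>j\<in>{1..k}. real (card {\<phi> \<in> star_maps k l V A. \<phi> j = x}))
      + (\<Sum>j\<in>{k+1..k+l}. real (card {\<phi> \<in> star_maps k l V A. \<phi> j = x}))"
proof -
  let ?Z = "\<lambda>j. {\<phi> \<in> star_maps k l V A. \<phi> j = x}"
  have "finite (all_maps k l V)" using assms unfolding all_maps_def by (intro finite_PiE) auto
  then have "finite (star_maps k l V A)" unfolding star_maps_def by simp
  then have "card {\<phi> \<in> star_maps k l V A. x \<in> \<phi> ` {0..k+l}} \<le> card (\<Union>j\<in>{0..k+l}. ?Z j)"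
    by (intro card_mono) auto
  also have "\<dots> \<le> (\<Sum>j\<in>{0..k+l}. card (?Z j))" by (rule card_UN_le) simp
  finally have "real (card {\<phi> \<in> star_maps k l V A. x \<in> \<phi> ` {0..k+l}})
      \<le> real (\<Sum>j\<in>{0..k+l}. card (?Z j))"
    by (simp only: of_nat_le_iff)
  also have "\<dots> = (\<Sum>j\<in>{0..k+l}. real (card (?Z j)))"
    by (rule of_nat_sum)
  also have "\<dots> = real (card (?Z 0)) + (\<Sum>j\<in>{1..k}. real (card (?Z j)))
      + (\<Sum>j\<in>{k+1..k+l}. real (card (?Z j)))"
  proof -
    have "{0..k+l} = insert 0 ({1..k} \<union> {k+1..k+l})" by auto
    then show ?thesis by (simp add: sum.union_disjoint)
  qed
  finally show ?thesis .
qed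

lemma card_star_maps_through_le:
  assumes fin: "finite V" and kl: "0 < k" "0 < l"
  shows "real (card {\<phi> \<in> star_maps k l V A. x \<in> \<phi> ` {0..k+l}}) \<le>
    peak_const k l * (max 0 (real (card (neighbours V A x)) - (real (k + l) - 2) / 2)) ^ (k + l)
    + real (card (neighbours V A x)) * leaf_coeff k l * real (card (non_neighbours V A x)) ^ (k + l - 1)"
proof -
  let ?Z = "\<lambda>j. {\<phi> \<in> star_maps k l V A. \<phi> j = x}"
  let ?d = "real (card (neighbours V A x))" and ?w = "real (card (non_neighbours V A x))"
  have "real (card {\<phi> \<in> star_maps k l V A. x \<in> \<phi> ` {0..k+l}})
      \<le> real (card (?Z 0)) + (\<Sum>j\<in>{1..k}. real (card (?Z j))) + (\<Sum>j\<in>{k+1..k+l}. real (card (?Z j)))"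
    by (rule card_star_maps_through_le_sum[OF fin])
  also have "\<dots> \<le> peak_const k l * (max 0 (?d - (real (k + l) - 2) / 2)) ^ (k + l)
      + (\<Sum>j\<in>{1..k}. ?d * peak_const (k - 1) l * ?w ^ (k + l - 1))
      + (\<Sum>j\<in>{k+1..k+l}. ?d * peak_const k (l - 1) * ?w ^ (k + l - 1))"
  proof (intro add_mono sum_mono)
    show "real (card (?Z 0)) \<le> peak_const k l * (max 0 (?d - (real (k + l) - 2) / 2)) ^ (k + l)"
      by (rule card_star_maps_centre_le[OF fin kl])
    show "real (card (?Z j)) \<le> ?d * peak_const (k - 1) l * ?w ^ (k + l - 1)" if "j \<in> {1..k}" for j
      using card_star_maps_leaf_le[OF fin, of j k l "k - 1" l A x] that kl by auto
    show "real (card (?Z j)) \<le> ?d * peak_const k (l - 1) * ?w ^ (k + l - 1)" if "j \<in> {k+1..k+l}" for j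
      using card_star_maps_leaf_le[OF fin, of j k l k "l - 1" A x] that kl by auto
  qed
  also have "\<dots> = peak_const k l * (max 0 (?d - (real (k + l) - 2) / 2)) ^ (k + l)
      + ?d * leaf_coeff k l * ?w ^ (k + l - 1)"
    by (simp add: leaf_coeff_def algebra_simps)
  finally show ?thesis .
qed

lemma card_maps_through:
  assumes fin: "finite V" and x: "x \<in> V"
  shows "card {\<phi> \<in> all_maps k l V. x \<in> \<phi> ` {0..k+l}} = card V ^ (k+l+1) - (card V - 1) ^ (k+l+1)"
proof -
  let ?S = "{\<phi> \<in> all_maps k l V. x \<in> \<phi> ` {0..k+l}}"
  have fin_all: "finite (all_maps k l V)" unfolding all_maps_def using fin by (intro finite_PiE) auto
  have "all_maps k l V - ?S = PiE {0..k+l} (\<lambda>_. V - {x})"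
    unfolding all_maps_def by (auto simp: PiE_iff)
  then have "card (all_maps k l V - ?S) = (card V - 1) ^ (k+l+1)"
    using fin x by (simp add: card_funcsetE)
  moreover have "card (all_maps k l V - ?S) = card (all_maps k l V) - card ?S"
    using fin_all by (intro card_Diff_subset) (auto intro: finite_subset)
  moreover have "card ?S \<le> card (all_maps k l V)" using fin_all by (intro card_mono) auto
  moreover have "card (all_maps k l V) = card V ^ (k+l+1)"
    unfolding all_maps_def using fin by (simp add: card_funcsetE)
  ultimately show ?thesis by linarith
qed

lemma card_maps_through_ge:
  assumes fin: "finite V" and x: "x \<in> V"
  shows "real (k+l+1) * (real (card V) - 1/2) ^ (k+l)
    \<le> real (card {\<phi> \<in> all_maps k l V. x \<in> \<phi> ` {0..k+l}})"
proof -
  have n: "1 \<le> card V" using fin x by (simp add: Suc_le_eq card_gt_0_iff) blast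
  have "(card V - 1) ^ (k+l+1) \<le> card V ^ (k+l+1)" by (intro power_mono) auto
  have "real (k+l+1) * (real (card V) - 1/2) ^ (k+l)
      = 2 * real (Suc (k+l)) * (1/2) * (real (card V) - 1/2) ^ (k+l)"
    by simp
  also have "\<dots> \<le> ((real (card V) - 1/2) + 1/2) ^ Suc (k+l) - ((real (card V) - 1/2) - 1/2) ^ Suc (k+l)"
    using n by (intro power_diff_power_ge) auto
  also have "\<dots> = real (card {\<phi> \<in> all_maps k l V. x \<in> \<phi> ` {0..k+l}})"
    using n \<open>(card V - 1) ^ (k+l+1) \<le> card V ^ (k+l+1)\<close>
    by (simp add: card_maps_through[OF fin x] of_nat_diff)
  finally show ?thesis .
qed

lemma OPT_diag_ge:
  assumes "0 < k" "0 \<le> a" "a \<le> 1"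
  shows "a * (1 - a) ^ (2*k) * peak_const k k \<le> OPT k k"
proof -
  define f where "f = (\<lambda>\<alpha>::real. \<alpha> * (1 - \<alpha>) ^ (2*k) + (1 - \<alpha>) * \<alpha> ^ (2*k))"
  have "bdd_above (f ` {0..1})"
  proof (rule bdd_aboveI2)
    fix \<alpha> :: real assume "\<alpha> \<in> {0..1}"
    then have "\<alpha> * (1 - \<alpha>) ^ (2*k) \<le> 1" "(1 - \<alpha>) * \<alpha> ^ (2*k) \<le> 1"
      by (simp_all add: mult_le_one power_le_one)
    then show "f \<alpha> \<le> 2" unfolding f_def by linarith
  qed
  then have "a * (1 - a) ^ (2*k) \<le> Sup (f ` {0..1})"
    using assms by (intro cSup_upper2[of "f a"]) (auto simp: f_def)
  then have "1 / 2 ^ (2*k) * (a * (1 - a) ^ (2*k)) \<le> 1 / 2 ^ (2*k) * Sup (f ` {0..1})"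
    by (rule mult_left_mono) simp
  moreover have "OPT k k = 1 / 2 ^ (2*k) * Sup (f ` {0..1})"
    by (simp add: OPT_def f_def Let_def)
  moreover have "peak_const k k = 1 / 2 ^ (2*k)" using assms(1) by (rule peak_const_diag)
  ultimately show ?thesis by (metis mult.commute)
qed

lemma OPT_off_diag_ge:
  assumes "l < k" "0 \<le> a" "a \<le> 1/2"
  shows "a * (1 - a) ^ (k+l) * peak_const k l \<le> OPT k l"
proof -
  define m where "m = k + l"
  define C :: real where "C = real (k-1) ^ (k-1) * real l ^ l / real (m-1) ^ (m-1)"
  define g where "g = (\<lambda>(\<alpha>::real, d::real). \<alpha> * (1 - \<alpha>) ^ m * d ^ k * (1 - d) ^ l
    + C * (1 - \<alpha>) * \<alpha> ^ m * (1 - d))"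
  define B :: "(real \<times> real) set" where "B = {0..1/2} \<times> {0..real k / real m}"
  have m: "0 < real m" using assms by (simp add: m_def)
  have C: "0 \<le> C" by (simp add: C_def)
  have km: "real k / real m \<le> 1" using m by (simp add: m_def)
  have "bdd_above (g ` B)"
  proof (rule bdd_aboveI2)
    fix p assume "p \<in> B"
    then obtain \<alpha> d where p: "p = (\<alpha>, d)" "0 \<le> \<alpha>" "\<alpha> \<le> 1" "0 \<le> d" "d \<le> 1"
      using km by (cases p) (auto simp: B_def)
    then have "\<alpha> * (1 - \<alpha>) ^ m * d ^ k * (1 - d) ^ l \<le> 1" "(1 - \<alpha>) * \<alpha> ^ m * (1 - d) \<le> 1"
      by (simp_all add: mult_le_one power_le_one)
    then show "g p \<le> 1 + C"
      using C mult_left_le[of "(1 - \<alpha>) * \<alpha> ^ m * (1 - d)" C] p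
      by (simp add: g_def mult.assoc)
  qed
  moreover have "(a, real k / real m) \<in> B" using assms m by (simp add: B_def m_def)
  moreover have "a * (1 - a) ^ m * peak_const k l \<le> g (a, real k / real m)"
  proof -
    have "1 - real k / real m = real l / real m" using m by (simp add: m_def field_simps)
    then have "peak_const k l = (real k / real m) ^ k * (1 - real k / real m) ^ l"
      using assms by (simp add: peak_const_eq_powers m_def)
    moreover have "0 \<le> C * (1 - a) * a ^ m * (1 - real k / real m)" using assms C km by simp
    ultimately show ?thesis by (simp add: g_def mult_ac)
  qed
  ultimately have "a * (1 - a) ^ m * peak_const k l \<le> Sup (g ` B)"
    by (intro cSup_upper2) auto
  moreover have "OPT k l = Sup (g ` B)"
    using assms by (simp add: OPT_def g_def B_def C_def m_def Let_def)
  ultimately show ?thesis by (simp add: m_def)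
qed

text \<open>The witness is \<open>\<alpha> = 1/(m+1)\<close> (with \<open>d = k/m\<close> if \<open>k > l\<close>), dropping the second
  summand.\<close>
lemma OPT_ge:
  assumes "l \<le> k" "1 \<le> l"
  shows "peak_const k l * (real (k+l) / (real (k+l) + 1)) ^ (k+l) / (real (k+l) + 1) \<le> OPT k l"
proof -
  define a :: real where "a = 1 / (real (k+l) + 1)"
  have a: "0 \<le> a" "a \<le> 1/2" "1 - a = real (k+l) / (real (k+l) + 1)"
    using assms by (auto simp: a_def field_simps)
  have "peak_const k l * (real (k+l) / (real (k+l) + 1)) ^ (k+l) / (real (k+l) + 1)
      = a * (1 - a) ^ (k+l) * peak_const k l"
    unfolding a(3) by (simp add: a_def)
  also have "\<dots> \<le> OPT k l"
  proof (cases "k = l")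
    case True
    have "a * (1 - a) ^ (2*k) * peak_const k k \<le> OPT k k"
      using assms a(1,2) by (intro OPT_diag_ge) auto
    then show ?thesis using True by (simp add: mult_2)
  next
    case False
    then show ?thesis using assms a(1,2) by (intro OPT_off_diag_ge) auto
  qed
  finally show ?thesis .
qed

text \<open>The factor \<open>1.6 = 3/5 + 1\<close>: \<open>(1 - 1/k)\<^sup>k\<^sup>-\<^sup>1 \<le> 3/5\<close> for \<open>k \<ge> 3\<close>, while the
  in-leaf term is estimated trivially.\<close>
lemma leaf_coeff_le:
  assumes "l \<le> k" "1 \<le> l" "6 \<le> k + l"
  shows "leaf_coeff k l \<le> 16/10 * real (k+l) ^ (k+l) / real (k+l-1) ^ (k+l-1) * peak_const k l"
proof -
  have e: "k - 1 + l = k + l - 1" "k + (l - 1) = k + l - 1" using assms by auto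
  have "leaf_coeff k l = (real k * real (k - 1) ^ (k - 1) * real l ^ l
      + real l * real (l - 1) ^ (l - 1) * real k ^ k) / real (k+l-1) ^ (k+l-1)"
    unfolding leaf_coeff_def peak_const_def e by (simp add: add_divide_distrib mult_ac)
  also have "\<dots> \<le> (3/5 * real k ^ k * real l ^ l + real l ^ l * real k ^ k) / real (k+l-1) ^ (k+l-1)"
    using pred_self_power_le[of k] pred_self_power_le_self_power[of l] assms
    by (intro divide_right_mono add_mono mult_right_mono) auto
  also have "\<dots> = 16/10 * real (k+l) ^ (k+l) / real (k+l-1) ^ (k+l-1) * peak_const k l"
    using self_power_pos[of "k+l"] by (simp add: peak_const_def field_simps)
  finally show ?thesis .
qed

lemma card_star_maps_through_ge:
  assumes fin: "finite V" and x: "x \<in> V" and kl: "l \<le> k" "1 \<le> l"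
    and s: "OPT k l \<le> s_val k l V A x"
  shows "peak_const k l * (real (k+l) / (real (k+l) + 1)) ^ (k+l) * (real (card V) - 1/2) ^ (k+l)
    \<le> real (card {\<phi> \<in> star_maps k l V A. x \<in> \<phi> ` {0..k+l}})"
proof -
  let ?N = "real (card {\<phi> \<in> star_maps k l V A. x \<in> \<phi> ` {0..k+l}})"
  let ?M = "real (card {\<phi> \<in> all_maps k l V. x \<in> \<phi> ` {0..k+l}})"
  define c where "c = peak_const k l * (real (k+l) / (real (k+l) + 1)) ^ (k+l) / (real (k+l) + 1)"
  define h where "h = real (card V) - 1/2"
  have "0 < card V" using fin x card_gt_0_iff by blast
  then have "0 < h" by (simp add: h_def)
  have M: "real (k+l+1) * h ^ (k+l) \<le> ?M" unfolding h_def by (rule card_maps_through_ge[OF fin x])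
  have "0 \<le> c" unfolding c_def using peak_const_pos[of k l] by simp
  have "c \<le> ?N / ?M" using OPT_ge[OF kl] s by (simp add: c_def s_val_def)
  moreover have "0 < real (k+l+1) * h ^ (k+l)" using \<open>0 < h\<close> by simp
  with M have "0 < ?M" by linarith
  ultimately have "c * ?M \<le> ?N" by (simp add: pos_le_divide_eq)
  moreover have "c * (real (k+l+1) * h ^ (k+l)) \<le> c * ?M" using M \<open>0 \<le> c\<close> by (rule mult_left_mono)
  moreover have "c * (real (k+l+1) * h ^ (k+l))
      = peak_const k l * (real (k+l) / (real (k+l) + 1)) ^ (k+l) * h ^ (k+l)"
  proof -
    have cancel: "P / (r + 1) * ((r + 1) * H) = P * H" if "0 \<le> r" for P r H :: real
      using that by (simp add: field_simps)
    have "real (k+l+1) = real (k+l) + 1" by simp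
    then show ?thesis unfolding c_def by (simp only:) (rule cancel, simp)
  qed
  ultimately show ?thesis unfolding h_def[symmetric] by linarith
qed

lemma star_profile_scaled_lt:
  fixes U d h K :: real
  assumes m: "6 \<le> m" and K: "0 \<le> K" "K \<le> 16/10 * real m ^ m / real (m - 1) ^ (m - 1)"
    and h: "0 < h" and d: "h / 2 \<le> d" "d \<le> h"
    and U: "0 \<le> U" "U \<le> d" "U < (1 - 1 / real m ^ 3) * (real m / (real m + 1)) * h"
  shows "U ^ m + K * d * (h - d) ^ (m - 1) < (real m / (real m + 1)) ^ m * h ^ m"
proof -
  have "star_profile m K (U / h) (d / h) < (real m / (real m + 1)) ^ m"
    using h d U by (intro star_profile_lt[OF m K]) (auto simp: field_simps)
  then have "h ^ m * star_profile m K (U / h) (d / h) < h ^ m * (real m / (real m + 1)) ^ m"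
    using h by (intro mult_strict_left_mono) auto
  moreover have "h ^ m * star_profile m K (U / h) (d / h) = U ^ m + K * d * (h - d) ^ (m - 1)"
  proof -
    have "h ^ m = h * h ^ (m - 1)" using m by (cases m) auto
    then have "h ^ m * (K * (d / h) * (1 - d / h) ^ (m - 1)) = K * d * (h * (1 - d / h)) ^ (m - 1)"
      using h by (simp add: power_mult_distrib)
    also have "h * (1 - d / h) = h - d" using h by (simp add: field_simps)
    finally show ?thesis using h by (simp add: star_profile_def distrib_left power_divide)
  qed
  ultimately show ?thesis by (simp add: mult.commute)
qed

lemma card_star_maps_through_le_shifted:
  assumes G: "digraph V A" and x: "x \<in> V" and kl: "0 < k" "0 < l"
  shows "real (card {\<phi> \<in> star_maps k l V A. x \<in> \<phi> ` {0..k+l}}) \<le>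
    peak_const k l * (max 0 (real (card (neighbours V A x)) - (real (k + l) - 2) / 2)) ^ (k + l)
    + real (card (neighbours V A x)) * leaf_coeff k l
      * (real (card V) - 1/2 - real (card (neighbours V A x))) ^ (k + l - 1)"
proof -
  have "real (card (non_neighbours V A x)) \<le> real (card V) - 1/2 - real (card (neighbours V A x))"
    using card_non_neighbours[OF G x] by (simp add: of_nat_diff)
  then have "real (card (non_neighbours V A x)) ^ (k + l - 1)
      \<le> (real (card V) - 1/2 - real (card (neighbours V A x))) ^ (k + l - 1)"
    by (intro power_mono) auto
  then have "real (card (neighbours V A x)) * leaf_coeff k l * real (card (non_neighbours V A x)) ^ (k + l - 1)
      \<le> real (card (neighbours V A x)) * leaf_coeff k l
        * (real (card V) - 1/2 - real (card (neighbours V A x))) ^ (k + l - 1)"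
    by (intro mult_left_mono) (auto simp: leaf_coeff_nonneg)
  moreover have "finite V" using G by (simp add: digraph_def)
  ultimately show ?thesis using card_star_maps_through_le[OF _ kl, of V A x] by linarith
qed

lemma centre_excess_lt:
  fixes d n :: real
  assumes m: "6 \<le> m" and n: "1 \<le> n" and d: "d < (1 - 1 / real m ^ 3) * (real m / (real m + 1)) * n"
  shows "max 0 (d - (real m - 2) / 2) < (1 - 1 / real m ^ 3) * (real m / (real m + 1)) * (n - 1/2)"
proof -
  define T where "T = (1 - 1 / real m ^ 3) * (real m / (real m + 1))"
  have "1 < real m ^ 3" using m by (intro one_less_power) auto
  then have "0 < 1 - 1 / real m ^ 3" "1 - 1 / real m ^ 3 \<le> 1" by (auto simp: divide_less_eq_1)
  moreover have "0 < real m / (real m + 1)" "real m / (real m + 1) \<le> 1" using m by simp_all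
  ultimately have T: "0 < T" "T \<le> 1" unfolding T_def by (metis mult_pos_pos, metis less_imp_le mult_le_one)
  have "0 < T * (n - 1/2)" using T n by simp
  moreover have "d - (real m - 2) / 2 < T * (n - 1/2)"
  proof -
    have "d < T * n" using d unfolding T_def .
    moreover have "T * (n - 1/2) = T * n - T / 2" by (simp add: algebra_simps)
    moreover have "6 \<le> real m" using m by simp
    ultimately show ?thesis using T by argo
  qed
  ultimately show ?thesis unfolding T_def by simp
qed

lemma rho_ge_threshold:
  assumes kl: "l \<le> k" "1 \<le> l" "6 \<le> k + l" and G: "digraph V A" and x: "x \<in> V"
    and s: "OPT k l \<le> s_val k l V A x" and rho: "1/2 \<le> rho V A x"
  shows "(1 - 1 / real (k+l) ^ 3) * (real (k+l) / (real (k+l) + 1)) \<le> rho V A x"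
proof (rule ccontr)
  define m where "m = k + l"
  define T where "T = (1 - 1 / real m ^ 3) * (real m / (real m + 1))"
  define n where "n = card V"
  define d where "d = card (neighbours V A x)"
  define h where "h = real n - 1/2"
  define U where "U = max 0 (real d - (real m - 2) / 2)"
  define c where "c = peak_const k l"
  define K where "K = leaf_coeff k l / c"
  let ?N = "real (card {\<phi> \<in> star_maps k l V A. x \<in> \<phi> ` {0..k+l}})"
  have fin: "finite V" using G by (simp add: digraph_def)
  have dn: "d + 1 \<le> n" using card_non_neighbours(2)[OF G x] by (simp add: n_def d_def)
  have "0 < h" "real d \<le> h" using dn by (simp_all add: h_def)
  have n: "0 < real n" using dn by simp
  have rho_dn: "rho V A x = real d / real n" by (simp add: rho_eq d_def n_def)
  have "real n \<le> 2 * real d" using rho n unfolding rho_dn by (simp add: le_divide_eq)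
  then have "h / 2 \<le> real d" by (simp add: h_def)
  assume "\<not> ?thesis"
  then have "rho V A x < T" by (simp add: T_def m_def)
  then have "real d < T * real n" using n unfolding rho_dn by (simp add: divide_less_eq)
  then have "U < T * h" using kl dn unfolding U_def T_def h_def m_def by (intro centre_excess_lt) auto
  have "0 < c" by (simp add: c_def peak_const_pos)
  have K: "0 \<le> K" "K \<le> 16/10 * real m ^ m / real (m - 1) ^ (m - 1)"
    using leaf_coeff_le[OF kl] leaf_coeff_nonneg[of k l] \<open>0 < c\<close>
    by (simp_all add: K_def c_def m_def pos_divide_le_eq)
  have "?N \<le> c * U ^ m + real d * leaf_coeff k l * (h - real d) ^ (m - 1)"
    using card_star_maps_through_le_shifted[OF G x] kl by (simp add: c_def U_def d_def h_def n_def m_def)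
  also have "\<dots> = c * (U ^ m + K * real d * (h - real d) ^ (m - 1))"
    using \<open>0 < c\<close> by (simp add: K_def algebra_simps)
  also have "\<dots> < c * ((real m / (real m + 1)) ^ m * h ^ m)"
    using star_profile_scaled_lt[OF _ K \<open>0 < h\<close> \<open>h / 2 \<le> real d\<close> \<open>real d \<le> h\<close>, of U]
      \<open>U < T * h\<close> \<open>0 < c\<close> kl
    by (intro mult_strict_left_mono) (auto simp: U_def T_def m_def)
  also have "\<dots> \<le> ?N"
    using card_star_maps_through_ge[OF fin x kl(1,2) s] by (simp add: c_def h_def n_def m_def mult_ac)
  finally show False by (simp only: less_irrefl)
qed

theorem claimA3:
  fixes k l :: nat and V :: "'a set" and A :: "'a \<Rightarrow> 'a \<Rightarrow> bool"
  assumes "k \<ge> l" "l \<ge> 1" "k + l \<ge> 6"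
    and "digraph V A"
    and "\<forall>v\<in>V. s_val k l V A v \<ge> OPT k l"
    and "Xset V A \<noteq> {}"
  shows "Dval V A \<ge> (1 - 1 / real (k+l) ^ 3) * (real (k+l) / (real (k+l) + 1))"
proof -
  have "finite (Xset V A)" using assms(4) by (simp add: digraph_def Xset_def)
  then have "Dval V A \<in> rho V A ` Xset V A"
    unfolding Dval_def using assms(6) by (intro Min_in) auto
  then obtain x where "x \<in> V" "1/2 \<le> rho V A x" "Dval V A = rho V A x"
    by (auto simp: Xset_def)
  then show ?thesis using rho_ge_threshold[OF assms(1-4)] assms(5) by simp
qed

end
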